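(* Let $P=P_1\cdots P_p$ and $T=T_1\cdots T_t$ be strings over a finite alphabet $\Sigma$, and let $R^j(m_{r,i})$ be the bits computed by the GSM recurrence described in the context. Let $(r,i)$ be any pair with $r\in\{-1,0,1\}$, $i\in\{1,\dots,p\}$ and $(r,i)\notin\{(-1,1),(1,p)\}$, and let $j\in\{i,\dots,t\}$. If there exists a swap permutation $\pi$ for $P$ such that $(\pi(P))_{[1,i]}=T_{[j-i+1,j]}$ and $\pi(i)=i+r$, then $R^j(m_{r,i})=1$.
   Context: Strings: for a string $S$, $S_i$ is its $i$-th symbol and $S_{[i,j]}=S_iS_{i+1}\cdots S_j$. A swap permutation for a string $S$ of length $n$ is a permutation $\pi$ of $\{1,\dots,n\}$ such that (i) if $\pi(i)=j$ then $\pi(j)=i$; (ii) $\pi(i)\in\{i-1,i,i+1\}$ for all $i$; (iii) if $\pi(i)\neq i$ then $S_{\pi(i)}\neq S_i$. The swapped version is $\pi(S)=S_{\pi(1)}S_{\pi(2)}\cdots S_{\pi(n)}$. Bit vectors: all vectors below are elements of $\{0,1\}^p$ with entries indexed $1,\dots,p$; $\mid$ and $\&$ are bitwise OR and AND. $\mathit{LShift}(x)_1=0$ and $\mathit{LShift}(x)_i=x_{i-1}$ for $2\le i\le p$; $\mathit{RShift}(x)_i=x_{i+1}$ for $1\le i\le p-1$ and $\mathit{RShift}(x)_p=0$; $\mathit{LSO}(x)=\mathit{LShift}(x)\mid e_1$, where $e_1$ has a $1$ in entry $1$ and $0$ elsewhere. Masks: for $x\in\Sigma$, $D^x_i=1$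 iff $P_i=x$. GSM recurrence: $R_U^0=R_M^0=R_D^0=0^p$, and for $j=1,\dots,t$: $R_U'^{\,j}=\mathit{LSO}(R_D^{j-1})$, $R_M'^{\,j}=R_D'^{\,j}=\mathit{LSO}(R_M^{j-1}\mid R_U^{j-1})$, $R_U^{j}=R_U'^{\,j}\ \&\ \mathit{LShift}(D^{T_j})$, $R_M^{j}=R_M'^{\,j}\ \&\ D^{T_j}$, $R_D^{j}=R_D'^{\,j}\ \&\ \mathit{RShift}(D^{T_j})$. Notation: $R^j(m_{-1,i})=(R_U^j)_i$, $R^j(m_{0,i})=(R_M^j)_i$, $R^j(m_{1,i})=(R_D^j)_i$. *)

theory Defs
  imports Main
begin

text \<open>Strings are modelled as functions \<open>nat \<Rightarrow> 'a\<close> with a length;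
  only positions \<open>1..n\<close> are meaningful (1-based indexing as in the paper).
  Bit vectors in \<open>{0,1}^p\<close> are modelled as \<open>nat \<Rightarrow> bool\<close>, with entries
  \<open>1..p\<close> meaningful and all other entries False.\<close>

type_synonym bitvec = "nat \<Rightarrow> bool"

definition zerovec :: bitvec where
  "zerovec = (\<lambda>i. False)"

definition bor :: "bitvec \<Rightarrow> bitvec \<Rightarrow> bitvec" where
  "bor x y = (\<lambda>i. x i \<or> y i)"

definition band :: "bitvec \<Rightarrow> bitvec \<Rightarrow> bitvec" where
  "band x y = (\<lambda>i. x i \<and> y i)"

definition LShift :: "nat \<Rightarrow> bitvec \<Rightarrow> bitvec" where
  "LShift p x = (\<lambda>i. 2 \<le> i \<and> i \<le> p \<and> x (i - 1))"

definition RShift :: "nat \<Rightarrow> bitvec \<Rightarrow> bitvec" where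
  "RShift p x = (\<lambda>i. 1 \<le> i \<and> i + 1 \<le> p \<and> x (i + 1))"

definition e1 :: "nat \<Rightarrow> bitvec" where
  "e1 p = (\<lambda>i. i = 1 \<and> 1 \<le> p)"

definition LSO :: "nat \<Rightarrow> bitvec \<Rightarrow> bitvec" where
  "LSO p x = bor (LShift p x) (e1 p)"

definition mask :: "(nat \<Rightarrow> 'a) \<Rightarrow> nat \<Rightarrow> 'a \<Rightarrow> bitvec" where
  "mask P p x = (\<lambda>i. 1 \<le> i \<and> i \<le> p \<and> P i = x)"

text \<open>GSM recurrence: \<open>GSM P p T j = (R_U^j, R_M^j, R_D^j)\<close>.\<close>
fun GSM :: "(nat \<Rightarrow> 'a) \<Rightarrow> nat \<Rightarrow> (nat \<Rightarrow> 'a) \<Rightarrow> nat \<Rightarrow> bitvec \<times> bitvec \<times> bitvec" where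
  "GSM P p T 0 = (zerovec, zerovec, zerovec)"
| "GSM P p T (Suc j) =
     (let (RU, RM, RD) = GSM P p T j;
          RU' = LSO p RD;
          RM' = LSO p (bor RM RU);
          RD' = LSO p (bor RM RU);
          Dx = mask P p (T (Suc j))
      in (band RU' (LShift p Dx), band RM' Dx, band RD' (RShift p Dx)))"

text \<open>\<open>Rbit P p T j r i\<close> is \<open>R^j(m_{r,i})\<close>.\<close>
definition Rbit :: "(nat \<Rightarrow> 'a) \<Rightarrow> nat \<Rightarrow> (nat \<Rightarrow> 'a) \<Rightarrow> nat \<Rightarrow> int \<Rightarrow> nat \<Rightarrow> bool" where
  "Rbit P p T j r i =
     (case GSM P p T j of (RU, RM, RD) \<Rightarrow>
        (if r = -1 then RU i else if r = 0 then RM i else RD i))"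

definition swap_perm :: "(nat \<Rightarrow> 'a) \<Rightarrow> nat \<Rightarrow> (nat \<Rightarrow> nat) \<Rightarrow> bool" where
  "swap_perm S n \<pi> \<longleftrightarrow>
     bij_betw \<pi> {1..n} {1..n} \<and>
     (\<forall>i\<in>{1..n}. \<forall>j\<in>{1..n}. \<pi> i = j \<longrightarrow> \<pi> j = i) \<and>
     (\<forall>i\<in>{1..n}. \<pi> i = i - 1 \<or> \<pi> i = i \<or> \<pi> i = i + 1) \<and>
     (\<forall>i\<in>{1..n}. \<pi> i \<noteq> i \<longrightarrow> S (\<pi> i) \<noteq> S i)"

definition swapped :: "(nat \<Rightarrow> 'a) \<Rightarrow> (nat \<Rightarrow> nat) \<Rightarrow> nat \<Rightarrow> 'a" where
  "swapped S \<pi> = (\<lambda>k. S (\<pi> k))"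

end

theory Submission
  imports Defs
begin

text \<open>Induction on \<open>i\<close>, with \<open>r = \<pi>(i) - i\<close> read off the permutation: a match of
  \<open>\<pi>(P)\<close> up to \<open>i\<close> ending at \<open>j\<close> restricts to a match up to \<open>i - 1\<close> ending at \<open>j - 1\<close>.
  If \<open>i - 1\<close> and \<open>i\<close> are swapped with each other, the bit in \<open>R\<^sub>D\<close> at \<open>i - 1\<close> feeds
  \<open>R\<^sub>U\<close> at \<open>i\<close>; otherwise \<open>i - 1\<close> is fixed or swapped with \<open>i - 2\<close>, so its bit lies in
  \<open>R\<^sub>M\<close> or \<open>R\<^sub>U\<close>, which feed both \<open>R\<^sub>M\<close> and \<open>R\<^sub>D\<close> at \<open>i\<close>.\<close>

abbreviation RU :: "(nat \<Rightarrow> 'a) \<Rightarrow> nat \<Rightarrow> (nat \<Rightarrow> 'a) \<Rightarrow> nat \<Rightarrow> bitvec" where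
  "RU P p T j \<equiv> fst (GSM P p T j)"

abbreviation RM :: "(nat \<Rightarrow> 'a) \<Rightarrow> nat \<Rightarrow> (nat \<Rightarrow> 'a) \<Rightarrow> nat \<Rightarrow> bitvec" where
  "RM P p T j \<equiv> fst (snd (GSM P p T j))"

abbreviation RD :: "(nat \<Rightarrow> 'a) \<Rightarrow> nat \<Rightarrow> (nat \<Rightarrow> 'a) \<Rightarrow> nat \<Rightarrow> bitvec" where
  "RD P p T j \<equiv> snd (snd (GSM P p T j))"

lemma RU_Suc:
  "RU P p T (Suc j) i \<longleftrightarrow> 2 \<le> i \<and> i \<le> p \<and> RD P p T j (i - 1) \<and> P (i - 1) = T (Suc j)"
  by (auto simp: split_def Let_def band_def LSO_def bor_def e1_def LShift_def mask_def)

lemma RM_Suc: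
  "RM P p T (Suc j) i \<longleftrightarrow> 1 \<le> i \<and> i \<le> p \<and>
     (i = 1 \<or> RM P p T j (i - 1) \<or> RU P p T j (i - 1)) \<and> P i = T (Suc j)"
  by (auto simp: split_def Let_def band_def LSO_def bor_def e1_def LShift_def mask_def)

lemma RD_Suc:
  "RD P p T (Suc j) i \<longleftrightarrow> 1 \<le> i \<and> i + 1 \<le> p \<and>
     (i = 1 \<or> RM P p T j (i - 1) \<or> RU P p T j (i - 1)) \<and> P (i + 1) = T (Suc j)"
  by (auto simp: split_def Let_def band_def LSO_def bor_def e1_def LShift_def RShift_def mask_def)

lemma Rbit_minus_one [simp]: "Rbit P p T j (-1) i = RU P p T j i"
  and Rbit_zero [simp]: "Rbit P p T j 0 i = RM P p T j i"
  and Rbit_one [simp]: "Rbit P p T j 1 i = RD P p T j i"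
  by (simp_all add: Rbit_def split_def)

declare GSM.simps(2) [simp del]

lemma swap_perm_maps_to:
  "swap_perm S n \<pi> \<Longrightarrow> a \<in> {1..n} \<Longrightarrow> \<pi> a \<in> {1..n}"
  unfolding swap_perm_def bij_betw_def by blast

lemma swap_perm_involution:
  "swap_perm S n \<pi> \<Longrightarrow> a \<in> {1..n} \<Longrightarrow> \<pi> (\<pi> a) = a"
  using swap_perm_maps_to unfolding swap_perm_def by blast

lemma swap_perm_adjacent:
  "swap_perm S n \<pi> \<Longrightarrow> a \<in> {1..n} \<Longrightarrow> \<pi> a = a - 1 \<or> \<pi> a = a \<or> \<pi> a = a + 1"
  unfolding swap_perm_def by blast

definition swap_match :: "(nat \<Rightarrow> 'a) \<Rightarrow> (nat \<Rightarrow> nat) \<Rightarrow> (nat \<Rightarrow> 'a) \<Rightarrow> nat \<Rightarrow> nat \<Rightarrow> bool" where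
  "swap_match P \<pi> T i j \<longleftrightarrow> (\<forall>k\<in>{1..i}. swapped P \<pi> k = T (j - i + k))"

lemma swap_match_Suc_iff:
  "i \<le> j \<Longrightarrow> swap_match P \<pi> T (Suc i) (Suc j) \<longleftrightarrow> swap_match P \<pi> T i j \<and> P (\<pi> (Suc i)) = T (Suc j)"
  by (auto simp: swap_match_def swapped_def atLeastAtMostSuc_conv)

lemma GSM_bit_of_swap_match:
  assumes perm: "swap_perm P p \<pi>"
  shows "1 \<le> i \<Longrightarrow> i \<le> p \<Longrightarrow> i \<le> j \<Longrightarrow> swap_match P \<pi> T i j \<Longrightarrow>
    Rbit P p T j (int (\<pi> i) - int i) i"
proof (induction i arbitrary: j)
  case 0
  then show ?case by simp
next
  case (Suc m)
  then obtain j' where j: "j = Suc j'" by (cases j) auto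
  with Suc.prems have match: "swap_match P \<pi> T m j'" and T: "P (\<pi> (Suc m)) = T (Suc j')"
    by (simp_all add: swap_match_Suc_iff)
  have IH: "Rbit P p T j' (int (\<pi> m) - int m) m" if "1 \<le> m"
    using Suc.IH[OF that _ _ match] Suc.prems j by simp
  have unswapped_end: "m = 0 \<or> RM P p T j' m \<or> RU P p T j' m" if "\<pi> (Suc m) \<noteq> m"
  proof (cases "m = 0")
    case False
    then have m: "m \<in> {1..p}" using Suc.prems by simp
    have "\<pi> m \<noteq> Suc m"
      using swap_perm_involution[OF perm m] that by auto
    then have "\<pi> m = m \<or> \<pi> m + 1 = m"
      using swap_perm_adjacent[OF perm m] swap_perm_maps_to[OF perm m] by auto
    then have "int (\<pi> m) - int m \<in> {0, -1}" by auto
    then show ?thesis using IH False by auto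
  qed simp
  have Suc_m: "Suc m \<in> {1..p}" using Suc.prems by simp
  consider "\<pi> (Suc m) = m" | "\<pi> (Suc m) = Suc m" | "\<pi> (Suc m) = Suc (Suc m)"
    using swap_perm_adjacent[OF perm Suc_m] by auto
  then show ?case
  proof cases
    case 1
    then have m: "m \<in> {1..p}" using swap_perm_maps_to[OF perm Suc_m] by simp
    then have "RD P p T j' m"
      using IH swap_perm_involution[OF perm Suc_m] 1 by simp
    then show ?thesis using 1 m T j Suc.prems by (simp add: RU_Suc)
  next
    case 2
    then show ?thesis using unswapped_end T j Suc.prems by (auto simp: RM_Suc)
  next
    case 3
    then have "Suc (Suc m) \<le> p" using swap_perm_maps_to[OF perm Suc_m] by simp
    then show ?thesis using 3 unswapped_end T j Suc.prems by (auto simp: RD_Suc)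
  qed
qed

theorem mainTheorem1:
  fixes P T :: "nat \<Rightarrow> 'a::finite" and p t :: nat and r :: int and i j :: nat
  assumes "r \<in> {-1, 0, 1}" and "i \<in> {1..p}"
    and "(r, i) \<notin> {(-1, 1), (1, p)}"
    and "j \<in> {i..t}"
    and "\<exists>\<pi>. swap_perm P p \<pi> \<and>
           (\<forall>k\<in>{1..i}. swapped P \<pi> k = T (j - i + k)) \<and>
           int (\<pi> i) = int i + r"
  shows "Rbit P p T j r i"
proof -
  obtain \<pi> where perm: "swap_perm P p \<pi>" and match: "swap_match P \<pi> T i j"
    and offset: "int (\<pi> i) - int i = r"
    using assms(5) unfolding swap_match_def by auto
  show ?thesis
    using GSM_bit_of_swap_match[OF perm _ _ _ match] assms(2,4) offset by simp
qed

end
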